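(* For every $n\geq 2$ there exists a finitely generated subgroup $H\leqslant F_n\times F_n$ such that $\mathrm{Ord}_H(F_n\times F_n)=\mathbb{N}$. In particular, $F_n\times F_n$ does not have bounded subgroup spectra.
   Context: $F_n$ is the free group of rank $n$; $\mathbb{N}$ contains $0$. For a group $G$, a subset $S\subseteq G$ and $g\in G$, $\mathrm{Ord}_S(g)=\min\{k\geq 1: g^k\in S\}$ if such $k$ exists and $0$ otherwise; $\mathrm{Ord}_S(G)=\{\mathrm{Ord}_S(g):g\in G\}$. A group has bounded subgroup spectra if $\mathrm{Ord}_H(G)$ is bounded for every finitely generated $H\leqslant G$. *)

theory Defs
  imports "HOL-Algebra.Algebra"
begin

text \<open>Free group of rank n, modelled by freely reduced words over the letters
  x_0, ..., x_(n-1) and their inverses. A letter (i, False) stands for x_i and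
  (i, True) for its inverse.\<close>

type_synonym fg_word = "(nat \<times> bool) list"

definition fg_inverse_letter :: "nat \<times> bool \<Rightarrow> nat \<times> bool \<Rightarrow> bool" where
  "fg_inverse_letter x y \<longleftrightarrow> fst x = fst y \<and> snd x \<noteq> snd y"

fun fg_reduced :: "fg_word \<Rightarrow> bool" where
  "fg_reduced [] = True"
| "fg_reduced [x] = True"
| "fg_reduced (x # y # ws) = (\<not> fg_inverse_letter x y \<and> fg_reduced (y # ws))"

fun fg_cons :: "nat \<times> bool \<Rightarrow> fg_word \<Rightarrow> fg_word" where
  "fg_cons x [] = [x]"
| "fg_cons x (y # ws) = (if fg_inverse_letter x y then ws else x # y # ws)"

definition fg_reduce :: "fg_word \<Rightarrow> fg_word" where
  "fg_reduce ws = foldr fg_cons ws []"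

definition free_group :: "nat \<Rightarrow> fg_word monoid" where
  "free_group n = \<lparr> carrier = {ws. (\<forall>x \<in> set ws. fst x < n) \<and> fg_reduced ws},
                    monoid.mult = (\<lambda>u v. fg_reduce (u @ v)),
                    monoid.one = [] \<rparr>"

definition fin_gen_subgroup :: "('a, 'b) monoid_scheme \<Rightarrow> 'a set \<Rightarrow> bool" where
  "fin_gen_subgroup G H \<longleftrightarrow> subgroup H G \<and>
     (\<exists>S. finite S \<and> S \<subseteq> carrier G \<and> H = generate G S)"

definition Ord_in :: "('a, 'b) monoid_scheme \<Rightarrow> 'a set \<Rightarrow> 'a \<Rightarrow> nat" where
  "Ord_in G S g = (if \<exists>k::nat\<ge>1. g [^]\<^bsub>G\<^esub> k \<in> S
                    then (LEAST k::nat. k \<ge> 1 \<and> g [^]\<^bsub>G\<^esub> k \<in> S) else 0)"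

definition Ord_spectrum :: "('a, 'b) monoid_scheme \<Rightarrow> 'a set \<Rightarrow> nat set" where
  "Ord_spectrum G S = Ord_in G S ` carrier G"

definition bounded_subgroup_spectra :: "('a, 'b) monoid_scheme \<Rightarrow> bool" where
  "bounded_subgroup_spectra G \<longleftrightarrow>
     (\<forall>H. fin_gen_subgroup G H \<longrightarrow> (\<exists>B. \<forall>k \<in> Ord_spectrum G H. k \<le> B))"

end

theory Submission
  imports Defs "HOL-Library.Stream"
begin

text \<open>
  Let \<open>l\<^sub>j = r\<^sub>j\<close> be finitely many relations in \<open>x\<^sub>0, x\<^sub>1\<close> that hold in Thompson's group \<open>T\<close>
  for \<open>x\<^sub>0 \<mapsto> B\<close>, \<open>x\<^sub>1 \<mapsto> C\<close>, and let \<open>H \<le> F\<^sub>n \<times> F\<^sub>n\<close> be generated by the pairs \<open>(x\<^sub>i, x\<^sub>i)\<close> and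
  \<open>(l\<^sub>j r\<^sub>j\<inverse>, 1)\<close> (Mihailova's construction). Since \<open>H\<close> contains the diagonal,
  \<open>N = {u. (u, 1) \<in> H}\<close> is a normal subgroup of \<open>F\<^sub>n\<close> containing the relators, so \<open>F\<^sub>n/N\<close>
  satisfies the relations. These force words \<open>C\<^sub>m\<close> in \<open>x\<^sub>0, x\<^sub>1\<close> to satisfy \<open>C\<^sub>m\<^sup>m\<^sup>+\<^sup>2 = 1\<close>, hence
  \<open>(C\<^sub>m\<^sup>m\<^sup>+\<^sup>2, 1) \<in> H\<close>. Conversely both coordinates of an element of \<open>H\<close> have the same image in
  \<open>T\<close>, and the image of \<open>C\<^sub>m\<close> permutes \<open>m + 2\<close> cylinders of the Cantor set cyclically; so
  \<open>Ord\<^sub>H (C\<^sub>m, 1) = m + 2\<close>. Finally \<open>Ord\<^sub>H (x\<^sub>0, 1) = 0\<close> because \<open>B\<close> has infinite order, and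
  \<open>Ord\<^sub>H (1, 1) = 1\<close>.
\<close>

section \<open>Free groups\<close>

definition fg_flip :: "nat \<times> bool \<Rightarrow> nat \<times> bool" where
  "fg_flip x = (fst x, \<not> snd x)"

lemma fg_flip_flip [simp]: "fg_flip (fg_flip x) = x"
  by (simp add: fg_flip_def)

lemma fst_fg_flip [simp]: "fst (fg_flip x) = fst x"
  by (simp add: fg_flip_def)

lemma fg_inverse_letter_iff: "fg_inverse_letter x y \<longleftrightarrow> y = fg_flip x"
  by (cases x; cases y) (auto simp: fg_inverse_letter_def fg_flip_def)

lemma fg_reduced_Cons: "fg_reduced (x # w) \<longleftrightarrow> fg_reduced w \<and> (w = [] \<or> hd w \<noteq> fg_flip x)"
  by (cases w) (auto simp: fg_inverse_letter_iff)

lemma fg_reduced_successively: "fg_reduced w \<longleftrightarrow> successively (\<lambda>x y. \<not> fg_inverse_letter x y) w"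
  by (induction w rule: fg_reduced.induct) simp_all

lemma fg_cons_reduced: "fg_reduced (x # w) \<Longrightarrow> fg_cons x w = x # w"
  by (cases w) (auto simp: fg_inverse_letter_iff)

lemma fg_reduced_fg_cons: "fg_reduced w \<Longrightarrow> fg_reduced (fg_cons x w)"
  by (cases w) (auto simp: fg_reduced_Cons fg_inverse_letter_iff)

lemma fg_cons_fg_flip_cancel: "fg_reduced w \<Longrightarrow> fg_cons (fg_flip x) (fg_cons x w) = w"
proof (cases w)
  case (Cons y w')
  assume "fg_reduced w"
  then show ?thesis
    using Cons fg_cons_reduced[of y w'] by (auto simp: fg_inverse_letter_iff fg_reduced_Cons)
qed (simp add: fg_inverse_letter_iff)

lemma fg_reduced_foldr_fg_cons: "fg_reduced w \<Longrightarrow> fg_reduced (foldr fg_cons u w)"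
  by (induction u) (auto intro: fg_reduced_fg_cons)

lemma set_foldr_fg_cons: "set (foldr fg_cons u w) \<subseteq> set u \<union> set w"
proof (induction u)
  case (Cons x u)
  then show ?case by (cases "foldr fg_cons u w") auto
qed simp

lemma foldr_fg_cons_fg_cons:
  assumes "fg_reduced u" "fg_reduced w"
  shows "foldr fg_cons (fg_cons x u) w = fg_cons x (foldr fg_cons u w)"
proof (cases u)
  case (Cons y u')
  have "fg_reduced (foldr fg_cons u' w)"
    using assms by (intro fg_reduced_foldr_fg_cons)
  then show ?thesis
    using Cons fg_cons_fg_flip_cancel[of _ "fg_flip x"] by (auto simp: fg_inverse_letter_iff)
qed simp

lemma foldr_fg_cons_foldr:
  assumes "fg_reduced v" "fg_reduced w"
  shows "foldr fg_cons (foldr fg_cons u v) w = foldr fg_cons u (foldr fg_cons v w)"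
  by (induction u) (simp_all add: assms foldr_fg_cons_fg_cons fg_reduced_foldr_fg_cons)

lemma fg_reduce_reduced: "fg_reduced w \<Longrightarrow> fg_reduce w = w"
proof (induction w)
  case (Cons x w)
  then show ?case
    by (simp add: fg_reduce_def fg_reduced_Cons fg_cons_reduced)
qed (simp add: fg_reduce_def)

lemma carrier_free_group:
  "carrier (free_group n) = {w. (\<forall>x \<in> set w. fst x < n) \<and> fg_reduced w}"
  by (simp add: free_group_def)

lemma one_free_group: "\<one>\<^bsub>free_group n\<^esub> = []"
  by (simp add: free_group_def)

lemma mult_free_group: "u \<otimes>\<^bsub>free_group n\<^esub> v = foldr fg_cons u (fg_reduce v)"
  by (simp add: free_group_def fg_reduce_def)

theorem group_free_group: "group (free_group n)"
proof (rule groupI)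
  fix u v
  assume "u \<in> carrier (free_group n)" "v \<in> carrier (free_group n)"
  then show "u \<otimes>\<^bsub>free_group n\<^esub> v \<in> carrier (free_group n)"
    using set_foldr_fg_cons[of u "fg_reduce v"] fg_reduce_reduced[of v]
    by (auto simp: mult_free_group carrier_free_group intro: fg_reduced_foldr_fg_cons)
next
  fix u v w
  assume "u \<in> carrier (free_group n)" "v \<in> carrier (free_group n)" "w \<in> carrier (free_group n)"
  then have "fg_reduced v" "fg_reduced w"
    by (auto simp: carrier_free_group)
  then show "u \<otimes>\<^bsub>free_group n\<^esub> v \<otimes>\<^bsub>free_group n\<^esub> w =
             u \<otimes>\<^bsub>free_group n\<^esub> (v \<otimes>\<^bsub>free_group n\<^esub> w)"
    by (simp add: mult_free_group fg_reduce_reduced foldr_fg_cons_foldr fg_reduced_foldr_fg_cons)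
next
  fix u
  assume "u \<in> carrier (free_group n)"
  then have u: "fg_reduced u" "\<forall>x \<in> set u. fst x < n"
    by (auto simp: carrier_free_group)
  have "fg_reduced (rev (map fg_flip u))"
    using u(1) by (auto simp: fg_reduced_successively successively_map fg_inverse_letter_iff
        elim!: successively_mono)
  moreover have "foldr fg_cons (rev (map fg_flip u)) u = []"
    by (induction u) (simp_all add: fg_inverse_letter_iff)
  ultimately show "\<exists>v \<in> carrier (free_group n). v \<otimes>\<^bsub>free_group n\<^esub> u = \<one>\<^bsub>free_group n\<^esub>"
    using u by (intro bexI[of _ "rev (map fg_flip u)"])
      (auto simp: carrier_free_group mult_free_group one_free_group fg_reduce_reduced)
qed (auto simp: carrier_free_group mult_free_group one_free_group fg_reduce_reduced)

definition fg_gen :: "nat \<Rightarrow> fg_word" where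
  "fg_gen i = [(i, False)]"

lemma inv_fg_gen: "i < n \<Longrightarrow> inv\<^bsub>free_group n\<^esub> fg_gen i = [(i, True)]"
  by (rule group.inv_equality[OF group_free_group])
    (auto simp: fg_gen_def carrier_free_group mult_free_group one_free_group fg_reduce_def
      fg_inverse_letter_def)

lemma generate_free_group_fg_gen:
  "generate (free_group n) (fg_gen ` {..<n}) = carrier (free_group n)"
    (is "generate _ ?L = _")
proof
  interpret F: group "free_group n"
    by (rule group_free_group)
  show "generate (free_group n) ?L \<subseteq> carrier (free_group n)"
    by (rule F.generate_incl) (auto simp: fg_gen_def carrier_free_group)
  show "carrier (free_group n) \<subseteq> generate (free_group n) ?L"
  proof
    fix w
    assume "w \<in> carrier (free_group n)"
    then show "w \<in> generate (free_group n) ?L"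
    proof (induction w)
      case Nil
      then show ?case
        using generate.one[of "free_group n"] by (simp add: one_free_group)
    next
      case (Cons x w)
      then have x: "fst x < n" and w: "w \<in> carrier (free_group n)" and xw: "fg_reduced (x # w)"
        by (auto simp: carrier_free_group fg_reduced_Cons)
      have "[x] \<in> generate (free_group n) ?L"
      proof (cases "snd x")
        case True
        then have "[x] = inv\<^bsub>free_group n\<^esub> fg_gen (fst x)"
          using x by (simp add: inv_fg_gen prod_eq_iff)
        then show ?thesis
          using x by (auto intro: generate.inv)
      next
        case False
        then show ?thesis
          using x by (auto intro!: generate.incl image_eqI[of _ _ "fst x"] simp: fg_gen_def prod_eq_iff)
      qed
      moreover have "x # w = [x] \<otimes>\<^bsub>free_group n\<^esub> w"
        using w xw by (simp add: carrier_free_group mult_free_group fg_reduce_reduced fg_cons_reduced)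
      ultimately show ?case
        using Cons w by (metis generate.eng)
    qed
  qed
qed

definition fg_letter_eval :: "('g, 'b) monoid_scheme \<Rightarrow> (nat \<Rightarrow> 'g) \<Rightarrow> nat \<times> bool \<Rightarrow> 'g" where
  "fg_letter_eval G f x = (if snd x then inv\<^bsub>G\<^esub> f (fst x) else f (fst x))"

primrec fg_eval :: "('g, 'b) monoid_scheme \<Rightarrow> (nat \<Rightarrow> 'g) \<Rightarrow> fg_word \<Rightarrow> 'g" where
  "fg_eval G f [] = \<one>\<^bsub>G\<^esub>"
| "fg_eval G f (x # w) = fg_letter_eval G f x \<otimes>\<^bsub>G\<^esub> fg_eval G f w"

context group
begin

lemma fg_letter_eval_closed: "range f \<subseteq> carrier G \<Longrightarrow> fg_letter_eval G f x \<in> carrier G"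
  by (auto simp: fg_letter_eval_def)

lemma fg_eval_closed: "range f \<subseteq> carrier G \<Longrightarrow> fg_eval G f w \<in> carrier G"
  by (induction w) (simp_all add: fg_letter_eval_closed)

lemma fg_eval_fg_cons:
  assumes "range f \<subseteq> carrier G"
  shows "fg_eval G f (fg_cons x w) = fg_letter_eval G f x \<otimes> fg_eval G f w"
proof (cases w)
  case (Cons y w')
  have "f (fst x) \<in> carrier G"
    using assms by auto
  then have "fg_letter_eval G f x \<otimes> fg_letter_eval G f (fg_flip x) = \<one>"
    by (simp add: fg_letter_eval_def fg_flip_def)
  then show ?thesis
    using Cons assms
    by (simp add: fg_inverse_letter_iff fg_letter_eval_closed fg_eval_closed flip: m_assoc)
qed simp

lemma fg_eval_foldr_fg_cons:
  "range f \<subseteq> carrier G \<Longrightarrow> fg_eval G f (foldr fg_cons u w) = fg_eval G f u \<otimes> fg_eval G f w"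
  by (induction u) (simp_all add: fg_eval_fg_cons fg_letter_eval_closed fg_eval_closed m_assoc)

theorem fg_eval_hom: "range f \<subseteq> carrier G \<Longrightarrow> fg_eval G f \<in> hom (free_group n) G"
  by (rule homI) (simp_all add: fg_eval_closed mult_free_group fg_reduce_def fg_eval_foldr_fg_cons)

lemma fg_eval_fg_gen [simp]: "f i \<in> carrier G \<Longrightarrow> fg_eval G f (fg_gen i) = f i"
  by (simp add: fg_gen_def fg_letter_eval_def)

end

lemma (in group) generate_equalizer:
  assumes K: "group K" and f: "f \<in> hom G K" and g: "g \<in> hom G K"
    and S: "S \<subseteq> carrier G" and eq: "\<And>s. s \<in> S \<Longrightarrow> f s = g s"
    and x: "x \<in> generate G S"
  shows "f x = g x"
proof -
  interpret f: group_hom G K f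
    using K f by (simp add: group_hom_def group_hom_axioms_def is_group)
  interpret g: group_hom G K g
    using K g by (simp add: group_hom_def group_hom_axioms_def is_group)
  from x show ?thesis
  proof induction
    case (inv h)
    then show ?case
      using S eq by (auto simp: f.hom_inv g.hom_inv)
  next
    case (eng h1 h2)
    then show ?case
      using generate_in_carrier[OF S] by simp
  qed (simp_all add: eq)
qed

lemma pow_DirProd: "(x, y) [^]\<^bsub>G \<times>\<times> H\<^esub> (k::nat) = (x [^]\<^bsub>G\<^esub> k, y [^]\<^bsub>H\<^esub> k)"
  by (induction k) simp_all

lemma (in group) normal_if_diagonal_subgroup:
  assumes H: "subgroup H (G \<times>\<times> G)" and diag: "\<And>x. x \<in> carrier G \<Longrightarrow> (x, x) \<in> H"
  shows "{u \<in> carrier G. (u, \<one>) \<in> H} \<lhd> G"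
proof -
  interpret H: subgroup H "G \<times>\<times> G"
    by (rule H)
  show ?thesis
  proof (rule normal_invI)
    show "subgroup {u \<in> carrier G. (u, \<one>) \<in> H} G"
    proof (rule subgroupI)
      show "{u \<in> carrier G. (u, \<one>) \<in> H} \<noteq> {}"
        using H.one_closed by auto
    next
      fix u
      assume "u \<in> {u \<in> carrier G. (u, \<one>) \<in> H}"
      then show "inv u \<in> {u \<in> carrier G. (u, \<one>) \<in> H}"
        using H.m_inv_closed[of "(u, \<one>)"] by (simp add: inv_DirProd[OF is_group is_group])
    next
      fix u v
      assume "u \<in> {u \<in> carrier G. (u, \<one>) \<in> H}" "v \<in> {u \<in> carrier G. (u, \<one>) \<in> H}"
      then show "u \<otimes> v \<in> {u \<in> carrier G. (u, \<one>) \<in> H}"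
        using H.m_closed[of "(u, \<one>)" "(v, \<one>)"] by simp
    qed auto
  next
    fix x u
    assume x: "x \<in> carrier G" and u: "u \<in> {u \<in> carrier G. (u, \<one>) \<in> H}"
    have "(x, x) \<otimes>\<^bsub>G \<times>\<times> G\<^esub> (u, \<one>) \<otimes>\<^bsub>G \<times>\<times> G\<^esub> inv\<^bsub>G \<times>\<times> G\<^esub> (x, x) \<in> H"
      using x u diag by (intro H.m_closed H.m_inv_closed) auto
    then show "x \<otimes> u \<otimes> inv x \<in> {u \<in> carrier G. (u, \<one>) \<in> H}"
      using x u by (simp add: inv_DirProd[OF is_group is_group])
  qed
qed

lemma carrier_BijGroup_UNIV: "carrier (BijGroup UNIV) = {f. bij f}"
  by (simp add: BijGroup_def Bij_def)

lemma one_BijGroup_UNIV: "\<one>\<^bsub>BijGroup UNIV\<^esub> = id"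
  by (simp add: BijGroup_def id_def restrict_UNIV)

lemma mult_BijGroup_UNIV: "bij f \<Longrightarrow> bij g \<Longrightarrow> f \<otimes>\<^bsub>BijGroup UNIV\<^esub> g = f \<circ> g"
  by (simp add: BijGroup_def Bij_def compose_def comp_def restrict_UNIV)

lemma inv_BijGroup_UNIV: "f \<circ> g = id \<Longrightarrow> g \<circ> f = id \<Longrightarrow> inv\<^bsub>BijGroup UNIV\<^esub> f = g"
  using inv_BijGroup[of f UNIV] inv_unique_comp[of f g] o_bij[of g f]
  by (simp add: Bij_def restrict_UNIV)

lemma pow_BijGroup_UNIV: "bij f \<Longrightarrow> f [^]\<^bsub>BijGroup UNIV\<^esub> (k::nat) = f ^^ k"
proof (induction k)
  case (Suc k)
  then show ?case
    using monoid.nat_pow_closed[OF group.is_monoid[OF group_BijGroup], of f UNIV k]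
    by (simp add: carrier_BijGroup_UNIV mult_BijGroup_UNIV funpow_Suc_right del: funpow.simps)
qed (simp add: one_BijGroup_UNIV)

section \<open>Torsion forced by the Thompson relations\<close>

definition thompson_a :: "('g, 'b) monoid_scheme \<Rightarrow> 'g \<Rightarrow> 'g \<Rightarrow> 'g" where
  "thompson_a G b c = c \<otimes>\<^bsub>G\<^esub> b \<otimes>\<^bsub>G\<^esub> inv\<^bsub>G\<^esub> c \<otimes>\<^bsub>G\<^esub> b"

fun thompson_x :: "('g, 'b) monoid_scheme \<Rightarrow> 'g \<Rightarrow> 'g \<Rightarrow> nat \<Rightarrow> 'g" where
  "thompson_x G b c 0 = thompson_a G b c"
| "thompson_x G b c (Suc 0) = b"
| "thompson_x G b c (Suc (Suc k)) = inv\<^bsub>G\<^esub> thompson_a G b c \<otimes>\<^bsub>G\<^esub> thompson_x G b c (Suc k) \<otimes>\<^bsub>G\<^esub> thompson_a G b c"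

fun thompson_c :: "('g, 'b) monoid_scheme \<Rightarrow> 'g \<Rightarrow> 'g \<Rightarrow> nat \<Rightarrow> 'g" where
  "thompson_c G b c 0 = thompson_a G b c \<otimes>\<^bsub>G\<^esub> c"
| "thompson_c G b c (Suc 0) = c"
| "thompson_c G b c (Suc (Suc k)) = inv\<^bsub>G\<^esub> thompson_a G b c \<otimes>\<^bsub>G\<^esub> thompson_c G b c (Suc k) \<otimes>\<^bsub>G\<^esub> b"

text \<open>Relations that hold in Thompson's group \<open>T\<close> for \<open>b = B\<close> and \<open>c = C\<close>; then \<open>thompson_a\<close>
  is \<open>A\<close>, and \<open>thompson_c m\<close> is the element \<open>C\<^sub>m\<close> of order \<open>m + 2\<close>.\<close>

definition thompson_relations :: "('g, 'b) monoid_scheme \<Rightarrow> 'g \<Rightarrow> 'g \<Rightarrow> ('g \<times> 'g) set" where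
  "thompson_relations G b c =
    (let a = thompson_a G b c; x = thompson_x G b c; z = thompson_c G b c; d = a \<otimes>\<^bsub>G\<^esub> inv\<^bsub>G\<^esub> b in
     {(d \<otimes>\<^bsub>G\<^esub> x 2, x 2 \<otimes>\<^bsub>G\<^esub> d), (d \<otimes>\<^bsub>G\<^esub> x 3, x 3 \<otimes>\<^bsub>G\<^esub> d),
      (b \<otimes>\<^bsub>G\<^esub> z 2, c), (b \<otimes>\<^bsub>G\<^esub> z 3, z 2 \<otimes>\<^bsub>G\<^esub> x 2),
      (z 0 \<otimes>\<^bsub>G\<^esub> a, c \<otimes>\<^bsub>G\<^esub> c), (z 0 \<otimes>\<^bsub>G\<^esub> z 0, \<one>\<^bsub>G\<^esub>)})"

lemma finite_thompson_relations: "finite (thompson_relations G b c)"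
  by (simp add: thompson_relations_def Let_def)

context group
begin

lemma thompson_a_closed [simp]: "b \<in> carrier G \<Longrightarrow> c \<in> carrier G \<Longrightarrow> thompson_a G b c \<in> carrier G"
  by (simp add: thompson_a_def)

lemma thompson_x_closed [simp]: "b \<in> carrier G \<Longrightarrow> c \<in> carrier G \<Longrightarrow> thompson_x G b c k \<in> carrier G"
  by (induction k rule: induct_nat_012) simp_all

lemma thompson_c_closed [simp]: "b \<in> carrier G \<Longrightarrow> c \<in> carrier G \<Longrightarrow> thompson_c G b c k \<in> carrier G"
  by (induction k rule: induct_nat_012) simp_all

lemma thompson_relations_closed:
  "b \<in> carrier G \<Longrightarrow> c \<in> carrier G \<Longrightarrow> thompson_relations G b c \<subseteq> carrier G \<times> carrier G"
  by (simp add: thompson_relations_def Let_def)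

lemma mult_inv_cancel_left: "x \<in> carrier G \<Longrightarrow> y \<in> carrier G \<Longrightarrow> x \<otimes> (inv x \<otimes> y) = y"
  by (simp flip: m_assoc)

lemma inv_mult_cancel_left: "x \<in> carrier G \<Longrightarrow> y \<in> carrier G \<Longrightarrow> inv x \<otimes> (x \<otimes> y) = y"
  by (simp flip: m_assoc)

lemmas group_normalize = m_assoc mult_inv_cancel_left inv_mult_cancel_left inv_mult_group

lemma commutes_mult:
  "\<lbrakk>x \<in> carrier G; y \<in> carrier G; z \<in> carrier G; z \<otimes> x = x \<otimes> z; z \<otimes> y = y \<otimes> z\<rbrakk>
    \<Longrightarrow> z \<otimes> (x \<otimes> y) = (x \<otimes> y) \<otimes> z"
  by (metis m_assoc)

lemma commutes_inv:
  assumes "x \<in> carrier G" "z \<in> carrier G" "z \<otimes> x = x \<otimes> z"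
  shows "z \<otimes> inv x = inv x \<otimes> z"
proof -
  have "inv x \<otimes> (z \<otimes> x) \<otimes> inv x = inv x \<otimes> (x \<otimes> z) \<otimes> inv x"
    using assms(3) by simp
  then show ?thesis
    using assms(1,2) by (simp add: group_normalize)
qed

lemma conj_eq_if_commutes:
  assumes "x \<in> carrier G" "y \<in> carrier G" "z \<in> carrier G"
    and "(x \<otimes> inv y) \<otimes> z = z \<otimes> (x \<otimes> inv y)"
  shows "inv y \<otimes> z \<otimes> y = inv x \<otimes> z \<otimes> x"
proof -
  have "inv y \<otimes> z \<otimes> y = inv x \<otimes> ((x \<otimes> inv y) \<otimes> z) \<otimes> y"
    using assms(1-3) by (simp add: group_normalize)
  also have "\<dots> = inv x \<otimes> z \<otimes> x"
    using assms by (simp add: group_normalize)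
  finally show ?thesis .
qed

end

lemma (in group_hom) hom_thompson_a:
  "b \<in> carrier G \<Longrightarrow> c \<in> carrier G \<Longrightarrow> h (thompson_a G b c) = thompson_a H (h b) (h c)"
  by (simp add: thompson_a_def)

lemma (in group_hom) hom_thompson_x:
  "b \<in> carrier G \<Longrightarrow> c \<in> carrier G \<Longrightarrow> h (thompson_x G b c k) = thompson_x H (h b) (h c) k"
  by (induction k rule: induct_nat_012) (simp_all add: hom_thompson_a)

lemma (in group_hom) hom_thompson_c:
  "b \<in> carrier G \<Longrightarrow> c \<in> carrier G \<Longrightarrow> h (thompson_c G b c k) = thompson_c H (h b) (h c) k"
  by (induction k rule: induct_nat_012) (simp_all add: hom_thompson_a)

lemma (in group_hom) hom_thompson_relations:
  assumes "b \<in> carrier G" "c \<in> carrier G"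
  shows "(\<lambda>(l, r). (h l, h r)) ` thompson_relations G b c = thompson_relations H (h b) (h c)"
  using assms by (simp add: thompson_relations_def Let_def hom_thompson_a hom_thompson_x hom_thompson_c)

locale thompson_rels = group G for G (structure) +
  fixes b c
  assumes b_closed [simp]: "b \<in> carrier G" and c_closed [simp]: "c \<in> carrier G"
    and relations: "(l, r) \<in> thompson_relations G b c \<Longrightarrow> l = r"
begin

abbreviation "\<alpha> \<equiv> thompson_a G b c"
abbreviation "\<xi> \<equiv> thompson_x G b c"
abbreviation "\<gamma> \<equiv> thompson_c G b c"

lemma
  shows commutes_xi2: "(\<alpha> \<otimes> inv b) \<otimes> \<xi> 2 = \<xi> 2 \<otimes> (\<alpha> \<otimes> inv b)"
    and commutes_xi3: "(\<alpha> \<otimes> inv b) \<otimes> \<xi> 3 = \<xi> 3 \<otimes> (\<alpha> \<otimes> inv b)"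
    and b_mult_gamma2: "b \<otimes> \<gamma> 2 = c"
    and b_mult_gamma3: "b \<otimes> \<gamma> 3 = \<gamma> 2 \<otimes> \<xi> 2"
    and gamma0_mult_alpha: "\<gamma> 0 \<otimes> \<alpha> = c \<otimes> c"
    and gamma0_involution: "\<gamma> 0 \<otimes> \<gamma> 0 = \<one>"
  by (rule relations; simp add: thompson_relations_def Let_def)+

lemma xi_Suc: "m \<ge> 1 \<Longrightarrow> \<xi> (Suc m) = inv \<alpha> \<otimes> \<xi> m \<otimes> \<alpha>"
  by (cases m) auto

lemma commutes_xi: "m \<ge> 2 \<Longrightarrow> (\<alpha> \<otimes> inv b) \<otimes> \<xi> m = \<xi> m \<otimes> (\<alpha> \<otimes> inv b)"
proof (induction m rule: less_induct)
  case (less m)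
  consider "m = 2" | "m = 3" | "m \<ge> 4"
    using less.prems by linarith
  then show ?case
  proof cases
    case 3
    have conj: "inv b \<otimes> \<xi> (m - 2) \<otimes> b = inv \<alpha> \<otimes> \<xi> (m - 2) \<otimes> \<alpha>"
      using 3 less.IH[of "m - 2"] by (intro conj_eq_if_commutes) simp_all
    have xi_pred: "\<xi> (m - 1) = inv \<alpha> \<otimes> \<xi> (m - 2) \<otimes> \<alpha>" and xi_m: "\<xi> m = inv \<alpha> \<otimes> \<xi> (m - 1) \<otimes> \<alpha>"
      using 3 xi_Suc[of "m - 2"] xi_Suc[of "m - 1"] by (simp_all add: Suc_diff_Suc numeral_2_eq_2)
    have "inv (\<xi> 2) \<otimes> \<xi> (m - 1) \<otimes> \<xi> 2 = inv \<alpha> \<otimes> (inv b \<otimes> \<xi> (m - 2) \<otimes> b) \<otimes> \<alpha>"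
      unfolding xi_pred by (simp add: numeral_2_eq_2 group_normalize)
    also have "\<dots> = \<xi> m"
      unfolding conj xi_m xi_pred ..
    finally have "\<xi> m = inv (\<xi> 2) \<otimes> \<xi> (m - 1) \<otimes> \<xi> 2"
      by simp
    then show ?thesis
      using 3 less.IH[of "m - 1"] commutes_xi2
      by (simp add: commutes_mult commutes_inv)
  qed (simp_all add: commutes_xi2 commutes_xi3)
qed

lemma inv_b_conj_xi: "m \<ge> 2 \<Longrightarrow> inv b \<otimes> \<xi> m \<otimes> b = \<xi> (Suc m)"
  using conj_eq_if_commutes[of \<alpha> b "\<xi> m"] commutes_xi[of m] xi_Suc[of m] by simp

lemma xi_shift: "k < m \<Longrightarrow> \<xi> m \<otimes> \<xi> k = \<xi> k \<otimes> \<xi> (Suc m)"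
proof (induction k arbitrary: m rule: induct_nat_012)
  case 0
  then show ?case
    using xi_Suc[of m] by (simp add: group_normalize)
next
  case 1
  then show ?case
    using inv_b_conj_xi[of m] by (simp add: group_normalize flip: inv_b_conj_xi)
next
  case (ge2 k)
  have "\<xi> m \<otimes> \<xi> (Suc (Suc k)) = inv \<alpha> \<otimes> (\<xi> (m - 1) \<otimes> \<xi> (Suc k)) \<otimes> \<alpha>"
    using ge2.prems xi_Suc[of "m - 1"] by (simp add: group_normalize)
  also have "\<dots> = inv \<alpha> \<otimes> (\<xi> (Suc k) \<otimes> \<xi> m) \<otimes> \<alpha>"
    using ge2.prems ge2.IH(2)[of "m - 1"] by simp
  also have "\<dots> = \<xi> (Suc (Suc k)) \<otimes> \<xi> (Suc m)"
    using ge2.prems xi_Suc[of m] by (simp add: group_normalize)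
  finally show ?case .
qed

lemma xi_mult_gamma_Suc: "\<xi> n \<otimes> \<gamma> (Suc n) = \<gamma> n"
proof (induction n rule: induct_nat_012)
  case (ge2 n)
  have "\<xi> (Suc (Suc n)) \<otimes> \<gamma> (Suc (Suc (Suc n))) = inv \<alpha> \<otimes> (\<xi> (Suc n) \<otimes> \<gamma> (Suc (Suc n))) \<otimes> b"
    by (simp add: group_normalize)
  also have "\<dots> = \<gamma> (Suc (Suc n))"
    using ge2.IH(2) by simp
  finally show ?case .
next
  case 1
  show ?case
    using b_mult_gamma2 by (simp add: numeral_2_eq_2)
qed simp

lemma gamma_Suc_eq: "\<gamma> (Suc n) = inv (\<xi> n) \<otimes> \<gamma> n"
  using xi_mult_gamma_Suc[of n] by (simp add: inv_solve_left)

lemma xi_mult_gamma_Suc_Suc: "\<xi> m \<otimes> \<gamma> (Suc (Suc m)) = \<gamma> (Suc m) \<otimes> \<xi> (Suc m)"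
proof (induction m rule: induct_nat_012)
  case 1
  then show ?case
    using b_mult_gamma3 by (simp add: numeral_2_eq_2 numeral_3_eq_3)
next
  case (ge2 m)
  have "\<xi> (Suc (Suc m)) \<otimes> \<gamma> (Suc (Suc (Suc (Suc m))))
      = inv \<alpha> \<otimes> (\<xi> (Suc m) \<otimes> \<gamma> (Suc (Suc (Suc m)))) \<otimes> b"
    by (simp add: group_normalize)
  also have "\<dots> = inv \<alpha> \<otimes> \<gamma> (Suc (Suc m)) \<otimes> (\<xi> (Suc (Suc m)) \<otimes> b)"
    using ge2.IH(2) by (simp add: group_normalize)
  also have "\<dots> = inv \<alpha> \<otimes> \<gamma> (Suc (Suc m)) \<otimes> (b \<otimes> \<xi> (Suc (Suc (Suc m))))"
    using xi_shift[of 1 "Suc (Suc m)"] by simp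
  also have "\<dots> = \<gamma> (Suc (Suc (Suc m))) \<otimes> \<xi> (Suc (Suc (Suc m)))"
    by (simp add: group_normalize)
  finally show ?case .
qed (simp add: group_normalize)

lemma xi_mult_gamma: "k < n \<Longrightarrow> \<xi> k \<otimes> \<gamma> (Suc n) = \<gamma> n \<otimes> \<xi> (Suc k)"
proof (induction n)
  case (Suc n)
  show ?case
  proof (cases "k = n")
    case True
    then show ?thesis
      using xi_mult_gamma_Suc_Suc[of n] by simp
  next
    case False
    then have "k < n"
      using Suc.prems by simp
    then have "inv (\<xi> n) \<otimes> \<xi> k \<otimes> \<xi> (Suc n) = \<xi> k"
      using xi_shift[OF \<open>k < n\<close>, symmetric] by (simp add: group_normalize)
    then have "\<xi> k \<otimes> inv (\<xi> (Suc n)) = inv (\<xi> n) \<otimes> \<xi> k"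
      by (simp add: inv_solve_right')
    then have "\<xi> k \<otimes> \<gamma> (Suc (Suc n)) = inv (\<xi> n) \<otimes> (\<xi> k \<otimes> \<gamma> (Suc n))"
      using gamma_Suc_eq[of "Suc n"] by (simp add: group_normalize flip: m_assoc)
    also have "\<dots> = \<gamma> (Suc n) \<otimes> \<xi> (Suc k)"
      using Suc.IH[OF \<open>k < n\<close>] gamma_Suc_eq[of n] by (simp add: group_normalize)
    finally show ?thesis .
  qed
qed simp

lemma gamma_mult_alpha: "\<gamma> m \<otimes> \<alpha> = \<gamma> (Suc m) \<otimes> \<gamma> (Suc m)"
proof (induction m)
  case 0
  then show ?case
    using gamma0_mult_alpha by simp
next
  case (Suc m)
  have swap: "\<xi> m \<otimes> inv (\<xi> (Suc m)) \<otimes> \<gamma> (Suc m) = \<gamma> (Suc m) \<otimes> \<xi> (Suc m)"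
    using xi_mult_gamma_Suc_Suc[of m] gamma_Suc_eq[of "Suc m"] by (simp add: m_assoc)
  have "\<gamma> (Suc m) \<otimes> inv (\<xi> (Suc m))
      = \<xi> (Suc m) \<otimes> inv (\<xi> m) \<otimes> (\<xi> m \<otimes> inv (\<xi> (Suc m)) \<otimes> \<gamma> (Suc m)) \<otimes> inv (\<xi> (Suc m))"
    by (simp add: group_normalize)
  also have "\<dots> = \<xi> (Suc m) \<otimes> inv (\<xi> m) \<otimes> \<gamma> (Suc m)"
    unfolding swap by (simp add: group_normalize)
  finally have swap': "\<gamma> (Suc m) \<otimes> inv (\<xi> (Suc m)) = \<xi> (Suc m) \<otimes> inv (\<xi> m) \<otimes> \<gamma> (Suc m)" .
  have "\<gamma> (Suc (Suc m)) \<otimes> \<gamma> (Suc (Suc m)) = inv (\<xi> (Suc m)) \<otimes> (\<gamma> (Suc m) \<otimes> inv (\<xi> (Suc m))) \<otimes> \<gamma> (Suc m)"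
    unfolding gamma_Suc_eq[of "Suc m"] by (simp add: group_normalize)
  also have "\<dots> = inv (\<xi> m) \<otimes> (\<gamma> (Suc m) \<otimes> \<gamma> (Suc m))"
    unfolding swap' by (simp add: group_normalize)
  also have "\<dots> = inv (\<xi> m) \<otimes> (\<gamma> m \<otimes> \<alpha>)"
    by (simp only: Suc.IH)
  also have "\<dots> = \<gamma> (Suc m) \<otimes> \<alpha>"
    unfolding gamma_Suc_eq[of m] by (simp add: group_normalize)
  finally show ?case
    by simp
qed

lemma gamma_Suc_pow:
  "1 \<le> j \<Longrightarrow> j \<le> Suc n \<Longrightarrow> \<gamma> (Suc n) [^] (Suc j) = \<gamma> n [^] j \<otimes> \<xi> (j - 1)"
proof (induction j rule: nat_induct_at_least)
  case base
  then show ?case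
    using gamma_mult_alpha[of n] by (simp add: numeral_2_eq_2)
next
  case (Suc j)
  have "\<gamma> (Suc n) [^] Suc (Suc j) = \<gamma> n [^] j \<otimes> (\<xi> (j - 1) \<otimes> \<gamma> (Suc n))"
    using Suc by (simp add: group_normalize)
  also have "\<dots> = \<gamma> n [^] Suc j \<otimes> \<xi> j"
    using Suc xi_mult_gamma[of "j - 1" n] by (simp add: group_normalize)
  finally show ?case
    by simp
qed

theorem gamma_pow_order: "\<gamma> n [^] Suc (Suc n) = \<one>"
proof (induction n)
  case 0
  then show ?case
    using gamma0_involution by (simp add: numeral_2_eq_2)
next
  case (Suc n)
  have "\<gamma> (Suc n) [^] Suc (Suc (Suc n)) = \<gamma> n [^] Suc n \<otimes> (\<xi> n \<otimes> \<gamma> (Suc n))"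
    using gamma_Suc_pow[of "Suc n" n] by (simp add: group_normalize)
  also have "\<dots> = \<gamma> n [^] Suc (Suc n)"
    using xi_mult_gamma_Suc[of n] by (simp add: group_normalize)
  finally show ?case
    using Suc.IH by simp
qed

end

lemma (in normal) thompson_c_pow_mem:
  assumes b: "b \<in> carrier G" and c: "c \<in> carrier G"
    and rel: "\<And>l r. (l, r) \<in> thompson_relations G b c \<Longrightarrow> l \<otimes> inv r \<in> H"
  shows "thompson_c G b c m [^] Suc (Suc m) \<in> H"
proof -
  interpret q: group_hom G "G Mod H" "\<lambda>x. H #> x"
    by (intro group_hom.intro group_hom_axioms.intro is_group factorgroup_is_group r_coset_hom_Mod)
  have "thompson_rels (G Mod H) (H #> b) (H #> c)"
  proof (intro thompson_rels.intro thompson_rels_axioms.intro factorgroup_is_group q.hom_closed b c)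
    fix l' r'
    assume "(l', r') \<in> thompson_relations (G Mod H) (H #> b) (H #> c)"
    then obtain l r where lr: "(l, r) \<in> thompson_relations G b c" and "l' = H #> l" "r' = H #> r"
      by (auto simp flip: q.hom_thompson_relations[OF b c])
    moreover have "l \<in> carrier G" "r \<in> carrier G"
      using lr thompson_relations_closed[OF b c] by auto
    ultimately show "l' = r'"
      using rel[OF lr] by (metis repr_independence rcos_module_rev is_group subgroup_axioms)
  qed
  then have "(H #> thompson_c G b c m) [^]\<^bsub>G Mod H\<^esub> Suc (Suc m) = H"
    using thompson_rels.gamma_pow_order q.hom_thompson_c[OF b c] by fastforce
  then have "H #> (thompson_c G b c m [^] Suc (Suc m)) = H"
    using b c by (simp add: q.hom_nat_pow)
  then show ?thesis
    using b c by (metis rcos_self nat_pow_closed thompson_c_closed subgroup_axioms)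
qed

section \<open>Thompson's group \<open>T\<close> acting on binary sequences\<close>

text \<open>The generators \<open>A\<close>, \<open>B\<close>, \<open>C\<close> of \<open>T\<close> and their inverses, acting on infinite binary
  sequences (the Cantor set) by prefix replacement.\<close>

definition A_map :: "bool stream \<Rightarrow> bool stream" where
  "A_map s = (case s of False ## t \<Rightarrow> False ## False ## t
                      | True ## False ## t \<Rightarrow> False ## True ## t
                      | True ## True ## t \<Rightarrow> True ## t)"

definition A_inv_map :: "bool stream \<Rightarrow> bool stream" where
  "A_inv_map s = (case s of False ## False ## t \<Rightarrow> False ## t
                          | False ## True ## t \<Rightarrow> True ## False ## t
                          | True ## t \<Rightarrow> True ## True ## t)"

definition B_map :: "bool stream \<Rightarrow> bool stream" where
  "B_map s = (case s of False ## t \<Rightarrow> False ## t | True ## t \<Rightarrow> True ## A_map t)"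

definition B_inv_map :: "bool stream \<Rightarrow> bool stream" where
  "B_inv_map s = (case s of False ## t \<Rightarrow> False ## t | True ## t \<Rightarrow> True ## A_inv_map t)"

definition C_map :: "bool stream \<Rightarrow> bool stream" where
  "C_map s = (case s of False ## t \<Rightarrow> True ## True ## t
                      | True ## False ## t \<Rightarrow> False ## t
                      | True ## True ## t \<Rightarrow> True ## False ## t)"

definition C_inv_map :: "bool stream \<Rightarrow> bool stream" where
  "C_inv_map s = (case s of True ## True ## t \<Rightarrow> False ## t
                          | False ## t \<Rightarrow> True ## False ## t
                          | True ## False ## t \<Rightarrow> True ## True ## t)"

lemma A_map_simps [simp]:
  "A_map (False ## t) = False ## False ## t"
  "A_map (True ## False ## t) = False ## True ## t"
  "A_map (True ## True ## t) = True ## t"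
  by (simp_all add: A_map_def)

lemma A_inv_map_simps [simp]:
  "A_inv_map (False ## False ## t) = False ## t"
  "A_inv_map (False ## True ## t) = True ## False ## t"
  "A_inv_map (True ## t) = True ## True ## t"
  by (simp_all add: A_inv_map_def)

lemma B_map_simps [simp]:
  "B_map (False ## t) = False ## t"
  "B_map (True ## t) = True ## A_map t"
  by (simp_all add: B_map_def)

lemma B_inv_map_simps [simp]:
  "B_inv_map (False ## t) = False ## t"
  "B_inv_map (True ## t) = True ## A_inv_map t"
  by (simp_all add: B_inv_map_def)

lemma C_map_simps [simp]:
  "C_map (False ## t) = True ## True ## t"
  "C_map (True ## False ## t) = False ## t"
  "C_map (True ## True ## t) = True ## False ## t"
  by (simp_all add: C_map_def)

lemma C_inv_map_simps [simp]:
  "C_inv_map (True ## True ## t) = False ## t"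
  "C_inv_map (False ## t) = True ## False ## t"
  "C_inv_map (True ## False ## t) = True ## True ## t"
  by (simp_all add: C_inv_map_def)

text \<open>The composites compared below read at most five leading letters, so splitting off five
  letters lets the simplifier decide them.\<close>

lemma stream_fun_eq_by_prefix:
  fixes f g :: "bool stream \<Rightarrow> 'a"
  assumes "\<forall>b0 b1 b2 b3 b4 t. f (b0 ## b1 ## b2 ## b3 ## b4 ## t) = g (b0 ## b1 ## b2 ## b3 ## b4 ## t)"
  shows "f = g"
proof
  fix s :: "bool stream"
  obtain b0 b1 b2 b3 b4 t where "s = b0 ## b1 ## b2 ## b3 ## b4 ## t"
    by (metis stream.collapse)
  then show "f s = g s"
    using assms by simp
qed

lemma T_map_inverses:
  "A_map \<circ> A_inv_map = id" "A_inv_map \<circ> A_map = id"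
  "B_map \<circ> B_inv_map = id" "B_inv_map \<circ> B_map = id"
  "C_map \<circ> C_inv_map = id" "C_inv_map \<circ> C_map = id"
  by (rule stream_fun_eq_by_prefix, simp add: all_bool_eq)+

lemma A_map_eq: "C_map \<circ> B_map \<circ> C_inv_map \<circ> B_map = A_map"
  by (rule stream_fun_eq_by_prefix) (simp add: all_bool_eq)

abbreviation Sym_streams :: "(bool stream \<Rightarrow> bool stream) monoid" where
  "Sym_streams \<equiv> BijGroup UNIV"

lemma bij_T_maps [simp]:
  "bij A_map" "bij A_inv_map" "bij B_map" "bij B_inv_map" "bij C_map" "bij C_inv_map"
  using T_map_inverses by (metis o_bij)+

lemma inv_Sym_maps [simp]:
  "inv\<^bsub>Sym_streams\<^esub> A_map = A_inv_map" "inv\<^bsub>Sym_streams\<^esub> B_map = B_inv_map"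
  "inv\<^bsub>Sym_streams\<^esub> C_map = C_inv_map"
  using T_map_inverses by (simp_all add: inv_BijGroup_UNIV)

lemma thompson_a_Sym [simp]: "thompson_a Sym_streams B_map C_map = A_map"
  using A_map_eq by (simp add: thompson_a_def carrier_BijGroup_UNIV mult_BijGroup_UNIV bij_comp)

abbreviation X_seq :: "nat \<Rightarrow> bool stream \<Rightarrow> bool stream" where
  "X_seq \<equiv> thompson_x Sym_streams B_map C_map"

abbreviation C_seq :: "nat \<Rightarrow> bool stream \<Rightarrow> bool stream" where
  "C_seq \<equiv> thompson_c Sym_streams B_map C_map"

lemma bij_X_seq: "bij (X_seq k)"
proof -
  have "X_seq k \<in> carrier Sym_streams"
    by (rule group.thompson_x_closed[OF group_BijGroup]) (simp_all add: carrier_BijGroup_UNIV)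
  then show ?thesis
    by (simp add: carrier_BijGroup_UNIV)
qed

lemma bij_C_seq: "bij (C_seq k)"
proof -
  have "C_seq k \<in> carrier Sym_streams"
    by (rule group.thompson_c_closed[OF group_BijGroup]) (simp_all add: carrier_BijGroup_UNIV)
  then show ?thesis
    by (simp add: carrier_BijGroup_UNIV)
qed

lemma X_seq_Suc_Suc:
  "X_seq (Suc (Suc k)) = A_inv_map \<circ> X_seq (Suc k) \<circ> A_map"
  using bij_X_seq[of "Suc k"] by (simp add: mult_BijGroup_UNIV bij_comp)

lemma C_seq_simps:
  "C_seq 0 = A_map \<circ> C_map"
  "C_seq (Suc 0) = C_map"
  "C_seq (Suc (Suc k)) = A_inv_map \<circ> C_seq (Suc k) \<circ> B_map"
  using bij_C_seq[of "Suc k"] by (simp_all add: mult_BijGroup_UNIV bij_comp)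

theorem thompson_rels_Sym: "thompson_rels Sym_streams B_map C_map"
proof (intro thompson_rels.intro thompson_rels_axioms.intro group_BijGroup)
  show "B_map \<in> carrier Sym_streams" "C_map \<in> carrier Sym_streams"
    by (simp_all add: carrier_BijGroup_UNIV)
  show "l = r" if "(l, r) \<in> thompson_relations Sym_streams B_map C_map" for l r
    using that unfolding thompson_relations_def Let_def
    by (elim insertE emptyE; simp add: eval_nat_numeral X_seq_Suc_Suc C_seq_simps
        mult_BijGroup_UNIV one_BijGroup_UNIV bij_comp; intro stream_fun_eq_by_prefix; simp add: all_bool_eq)
qed

text \<open>\<open>C\<^sub>m\<close> permutes the cylinders \<open>0, 1\<^sup>m\<^sup>+\<^sup>1, 1\<^sup>m0, \<dots>, 10\<close> cyclically.\<close>

lemma C_seq_False: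
  "C_seq m (False ## w) = replicate (Suc m) True @- w"
  by (induction m arbitrary: w rule: induct_nat_012) (simp_all add: C_seq_simps del: thompson_c.simps)

lemma C_seq_True_False:
  "1 \<le> i \<Longrightarrow> i \<le> m \<Longrightarrow>
    C_seq m (replicate i True @- False ## w) = replicate (i - 1) True @- False ## w"
proof (induction m arbitrary: i w rule: induct_nat_012)
  case 1
  then have "i = 1"
    by simp
  then show ?case
    by (simp add: C_seq_simps del: thompson_c.simps)
next
  case (ge2 m)
  consider "i = 1" | "i = 2" | j where "i = Suc (Suc (Suc j))"
  proof -
    have "i = 1 \<or> i = 2 \<or> (\<exists>j. i = Suc (Suc (Suc j)))"
      using ge2.prems by presburger
    then show thesis
      using that by blast
  qed
  then show ?case
  proof cases
    case 1
    then show ?thesis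
      using ge2.IH(2)[of 1 "False ## w"] by (simp add: C_seq_simps del: thompson_c.simps)
  next
    case 2
    then show ?thesis
      using ge2.IH(2)[of 1 "True ## w"] by (simp add: C_seq_simps numeral_2_eq_2 del: thompson_c.simps)
  next
    case 3
    then show ?thesis
      using ge2.prems ge2.IH(2)[of "Suc (Suc j)" w] by (simp add: C_seq_simps del: thompson_c.simps)
  qed
qed simp

lemma C_seq_True:
  "C_seq m (replicate (Suc m) True @- w) = replicate m True @- False ## w"
proof (induction m arbitrary: w rule: induct_nat_012)
  case 0
  obtain x w' where "w = x ## w'"
    by (metis stream.collapse)
  then show ?case
    by (cases x) (simp_all add: C_seq_simps del: thompson_c.simps)
qed (simp_all add: C_seq_simps del: thompson_c.simps)

lemma sconst_False: "sconst False = False ## sconst False"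
  by (subst siterate.ctr) simp

lemma C_seq_orbit:
  assumes z: "z = False ## z" and j: "1 \<le> j" "j \<le> Suc (Suc m)"
  shows "(C_seq m ^^ j) z = replicate (Suc (Suc m) - j) True @- z"
  using j
proof (induction j rule: nat_induct_at_least)
  case base
  then show ?case
    by (subst z) (simp add: C_seq_False)
next
  case (Suc j)
  have "(C_seq m ^^ Suc j) z
      = C_seq m (replicate (Suc (Suc m) - j) True @- False ## z)"
    using Suc by (simp flip: z)
  also have "\<dots> = replicate (Suc (Suc m) - Suc j) True @- z"
  proof (cases "j = 1")
    case True
    then show ?thesis
      using C_seq_True[of m "False ## z"] by (simp flip: z)
  next
    case False
    then show ?thesis
      using Suc C_seq_True_False[of "Suc (Suc m) - j" m z] by (simp add: Suc_diff_Suc flip: z)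
  qed
  finally show ?case .
qed

lemma C_seq_pow_ne_id: "1 \<le> j \<Longrightarrow> j \<le> Suc m \<Longrightarrow> C_seq m ^^ j \<noteq> id"
proof
  assume j: "1 \<le> j" "j \<le> Suc m" and "C_seq m ^^ j = id"
  then have "shd (sconst False) = shd (replicate (Suc (Suc m) - j) True @- sconst False)"
    using C_seq_orbit[OF sconst_False, of j m] j by simp
  then show False
    using j(2) by simp
qed

lemma B_map_pow: "(B_map ^^ j) (True ## False ## s) = True ## False ## replicate j False @- s"
  by (induction j) simp_all

lemma B_map_pow_ne_id: "j \<ge> 1 \<Longrightarrow> B_map ^^ j \<noteq> id"
proof
  assume "j \<ge> 1" and "B_map ^^ j = id"
  then have "shd (sconst True) = shd (replicate j False @- sconst True)"
    using B_map_pow[of j "sconst True"] by simp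
  then show False
    using \<open>j \<ge> 1\<close> by simp
qed

section \<open>A finitely generated subgroup with every order\<close>

lemma Ord_in_eqI:
  fixes k :: nat
  assumes "k \<ge> 1" "g [^]\<^bsub>G\<^esub> k \<in> S" "\<And>j::nat. 1 \<le> j \<Longrightarrow> j < k \<Longrightarrow> g [^]\<^bsub>G\<^esub> j \<notin> S"
  shows "Ord_in G S g = k"
  unfolding Ord_in_def using assms by (auto intro!: Least_equality leI)

lemma Ord_in_eq_0:
  assumes "\<And>k::nat. k \<ge> 1 \<Longrightarrow> g [^]\<^bsub>G\<^esub> k \<notin> S"
  shows "Ord_in G S g = 0"
  using assms unfolding Ord_in_def by auto

definition T_gen :: "nat \<Rightarrow> bool stream \<Rightarrow> bool stream" where
  "T_gen i = (if i = 0 then B_map else if i = 1 then C_map else id)"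

abbreviation T_rep :: "fg_word \<Rightarrow> bool stream \<Rightarrow> bool stream" where
  "T_rep \<equiv> fg_eval Sym_streams T_gen"

definition mihailova_gens :: "nat \<Rightarrow> (fg_word \<times> fg_word) set" where
  "mihailova_gens n =
     (\<lambda>i. (fg_gen i, fg_gen i)) ` {..<n} \<union>
     (\<lambda>(l, r). (l \<otimes>\<^bsub>free_group n\<^esub> inv\<^bsub>free_group n\<^esub> r, [])) `
       thompson_relations (free_group n) (fg_gen 0) (fg_gen 1)"

definition mihailova_subgroup :: "nat \<Rightarrow> (fg_word \<times> fg_word) set" where
  "mihailova_subgroup n = generate (free_group n \<times>\<times> free_group n) (mihailova_gens n)"

lemma T_rep_hom: "group_hom (free_group n) Sym_streams T_rep"
proof -
  have "range T_gen \<subseteq> carrier Sym_streams"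
    by (auto simp: T_gen_def carrier_BijGroup_UNIV)
  then show ?thesis
    by (intro group_hom.intro group_hom_axioms.intro group_free_group group_BijGroup
        group.fg_eval_hom)
qed

context
  fixes n :: nat
  assumes n: "n \<ge> 2"
begin

interpretation F: group "free_group n"
  by (rule group_free_group)

interpretation FF: group "free_group n \<times>\<times> free_group n"
  by (intro DirProd_group group_free_group)

interpretation T_rep: group_hom "free_group n" Sym_streams T_rep
  by (rule T_rep_hom)

abbreviation torsion_word :: "nat \<Rightarrow> fg_word" where
  "torsion_word m \<equiv> thompson_c (free_group n) (fg_gen 0) (fg_gen 1) m"

lemma fg_gen_closed [simp]: "i < n \<Longrightarrow> fg_gen i \<in> carrier (free_group n)"
  by (simp add: fg_gen_def carrier_free_group)

lemma zero_less_n [simp]: "0 < n" and one_less_n [simp]: "Suc 0 < n"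
  using n by simp_all

lemma gen0_closed: "fg_gen 0 \<in> carrier (free_group n)"
  and gen1_closed: "fg_gen 1 \<in> carrier (free_group n)"
  by simp_all

lemma T_rep_gens [simp]: "T_rep (fg_gen 0) = B_map" "T_rep (fg_gen 1) = C_map"
  by (simp_all add: T_gen_def carrier_BijGroup_UNIV)

lemma nil_closed [simp]: "[] \<in> carrier (free_group n)"
  using F.one_closed by (simp add: one_free_group)

lemma thompson_relations_free_group_closed:
  "(l, r) \<in> thompson_relations (free_group n) (fg_gen 0) (fg_gen 1) \<Longrightarrow>
    l \<in> carrier (free_group n) \<and> r \<in> carrier (free_group n)"
  using F.thompson_relations_closed[OF gen0_closed gen1_closed] by blast

lemma mihailova_gens_closed: "mihailova_gens n \<subseteq> carrier (free_group n \<times>\<times> free_group n)"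
  unfolding mihailova_gens_def by (auto dest: thompson_relations_free_group_closed simp del: One_nat_def)

lemma subgroup_mihailova_subgroup: "subgroup (mihailova_subgroup n) (free_group n \<times>\<times> free_group n)"
  unfolding mihailova_subgroup_def by (rule FF.generate_is_subgroup[OF mihailova_gens_closed])

lemma fin_gen_mihailova_subgroup: "fin_gen_subgroup (free_group n \<times>\<times> free_group n) (mihailova_subgroup n)"
  unfolding fin_gen_subgroup_def
proof (intro conjI exI[of _ "mihailova_gens n"])
  show "finite (mihailova_gens n)"
    by (simp add: mihailova_gens_def finite_thompson_relations)
  show "mihailova_subgroup n = generate (free_group n \<times>\<times> free_group n) (mihailova_gens n)"
    by (simp add: mihailova_subgroup_def)
qed (rule subgroup_mihailova_subgroup mihailova_gens_closed)+

lemma diagonal_mem_mihailova_subgroup: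
  assumes "x \<in> carrier (free_group n)"
  shows "(x, x) \<in> mihailova_subgroup n"
proof -
  interpret diag: group_hom "free_group n" "free_group n \<times>\<times> free_group n" "\<lambda>x. (x, x)"
    by (intro group_hom.intro group_hom_axioms.intro F.is_group FF.is_group)
      (auto simp: hom_def)
  have "(x, x) \<in> (\<lambda>x. (x, x)) ` generate (free_group n) (fg_gen ` {..<n})"
    using assms by (simp add: generate_free_group_fg_gen)
  also have "\<dots> = generate (free_group n \<times>\<times> free_group n) ((\<lambda>x. (x, x)) ` fg_gen ` {..<n})"
    by (rule diag.generate_img[symmetric]) auto
  also have "\<dots> \<subseteq> mihailova_subgroup n"
    unfolding mihailova_subgroup_def by (rule FF.mono_generate) (auto simp: mihailova_gens_def)
  finally show ?thesis .
qed

lemma torsion_word_pow_mem_mihailova_subgroup: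
  "(torsion_word m [^]\<^bsub>free_group n\<^esub> Suc (Suc m), []) \<in> mihailova_subgroup n"
proof -
  let ?N = "{u \<in> carrier (free_group n). (u, \<one>\<^bsub>free_group n\<^esub>) \<in> mihailova_subgroup n}"
  have N: "?N \<lhd> free_group n"
    by (rule F.normal_if_diagonal_subgroup[OF subgroup_mihailova_subgroup
          diagonal_mem_mihailova_subgroup])
  have relator_mem: "l \<otimes>\<^bsub>free_group n\<^esub> inv\<^bsub>free_group n\<^esub> r \<in> ?N"
    if lr: "(l, r) \<in> thompson_relations (free_group n) (fg_gen 0) (fg_gen 1)" for l r
  proof -
    have "(l \<otimes>\<^bsub>free_group n\<^esub> inv\<^bsub>free_group n\<^esub> r, []) \<in> mihailova_subgroup n"
      unfolding mihailova_subgroup_def mihailova_gens_def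
      by (intro generate.incl UnI2 rev_image_eqI[OF lr]) simp
    moreover have "l \<in> carrier (free_group n)" "r \<in> carrier (free_group n)"
      using thompson_relations_free_group_closed[OF lr] by auto
    ultimately show ?thesis
      by (simp add: one_free_group)
  qed
  have "torsion_word m [^]\<^bsub>free_group n\<^esub> Suc (Suc m) \<in> ?N"
    by (rule normal.thompson_c_pow_mem[OF N gen0_closed gen1_closed relator_mem])
  then show ?thesis
    by (simp add: one_free_group)
qed

lemma T_rep_eq_if_mem_mihailova_subgroup:
  assumes "(u, v) \<in> mihailova_subgroup n"
  shows "T_rep u = T_rep v"
proof -
  have "(T_rep \<circ> fst) (u, v) = (T_rep \<circ> snd) (u, v)"
  proof (rule FF.generate_equalizer[OF group_BijGroup])
    show "T_rep \<circ> fst \<in> hom (free_group n \<times>\<times> free_group n) Sym_streams"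
      "T_rep \<circ> snd \<in> hom (free_group n \<times>\<times> free_group n) Sym_streams"
      by (simp_all add: hom_of_fst hom_of_snd F.is_group T_rep.homh)
    show "mihailova_gens n \<subseteq> carrier (free_group n \<times>\<times> free_group n)"
      by (rule mihailova_gens_closed)
    show "(u, v) \<in> generate (free_group n \<times>\<times> free_group n) (mihailova_gens n)"
      using assms by (simp add: mihailova_subgroup_def)
  next
    fix s
    assume "s \<in> mihailova_gens n"
    then consider i where "s = (fg_gen i, fg_gen i)"
      | l r where "(l, r) \<in> thompson_relations (free_group n) (fg_gen 0) (fg_gen 1)"
          "s = (l \<otimes>\<^bsub>free_group n\<^esub> inv\<^bsub>free_group n\<^esub> r, [])"
      unfolding mihailova_gens_def by auto
    then show "(T_rep \<circ> fst) s = (T_rep \<circ> snd) s"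
    proof cases
      case (2 l r)
      have "(T_rep l, T_rep r) \<in> (\<lambda>(l, r). (T_rep l, T_rep r)) `
          thompson_relations (free_group n) (fg_gen 0) (fg_gen 1)"
        using 2(1) by (rule rev_image_eqI) simp
      then have "(T_rep l, T_rep r) \<in> thompson_relations Sym_streams B_map C_map"
        by (simp only: T_rep.hom_thompson_relations[OF gen0_closed gen1_closed] T_rep_gens)
      then have "T_rep l = T_rep r"
        by (rule thompson_rels.relations[OF thompson_rels_Sym])
      moreover have "l \<in> carrier (free_group n)" "r \<in> carrier (free_group n)"
        using thompson_relations_free_group_closed[OF 2(1)] by auto
      ultimately show ?thesis
        using 2(2) T_rep.hom_one by (simp add: one_free_group)
    qed simp
  qed
  then show ?thesis
    by simp
qed

lemma nil_pow: "[] [^]\<^bsub>free_group n\<^esub> (k::nat) = []"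
  using F.nat_pow_one by (simp add: one_free_group)

lemma pow_pair_nil: "(u, []) [^]\<^bsub>free_group n \<times>\<times> free_group n\<^esub> (k::nat) = (u [^]\<^bsub>free_group n\<^esub> k, [])"
  by (simp add: pow_DirProd nil_pow)

lemma pow_mem_mihailova_subgroup_imp:
  assumes "u \<in> carrier (free_group n)" "(u, []) [^]\<^bsub>free_group n \<times>\<times> free_group n\<^esub> (j::nat) \<in> mihailova_subgroup n"
  shows "T_rep u ^^ j = id"
proof -
  have "T_rep (u [^]\<^bsub>free_group n\<^esub> j) = T_rep []"
    using assms T_rep_eq_if_mem_mihailova_subgroup by (simp add: pow_pair_nil)
  moreover have "bij (T_rep u)"
    using assms(1) T_rep.hom_closed by (simp add: carrier_BijGroup_UNIV)
  ultimately show ?thesis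
    using assms(1) T_rep.hom_one
    by (simp add: T_rep.hom_nat_pow pow_BijGroup_UNIV one_free_group one_BijGroup_UNIV)
qed

lemma Ord_torsion_word:
  "Ord_in (free_group n \<times>\<times> free_group n) (mihailova_subgroup n)
     (torsion_word m, []) = Suc (Suc m)"
proof (rule Ord_in_eqI)
  show "(torsion_word m, []) [^]\<^bsub>free_group n \<times>\<times> free_group n\<^esub> Suc (Suc m)
      \<in> mihailova_subgroup n"
    unfolding pow_pair_nil by (rule torsion_word_pow_mem_mihailova_subgroup)
next
  fix j :: nat
  assume "1 \<le> j" "j < Suc (Suc m)"
  then show "(torsion_word m, []) [^]\<^bsub>free_group n \<times>\<times> free_group n\<^esub> j
      \<notin> mihailova_subgroup n"
    using pow_mem_mihailova_subgroup_imp[OF F.thompson_c_closed[OF gen0_closed gen1_closed], of m j]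
      C_seq_pow_ne_id[of j m]
    by (auto simp: T_rep.hom_thompson_c[OF gen0_closed gen1_closed] T_rep_gens simp del: One_nat_def)
qed simp

lemma Ord_gen0: "Ord_in (free_group n \<times>\<times> free_group n) (mihailova_subgroup n) (fg_gen 0, []) = 0"
  using pow_mem_mihailova_subgroup_imp[of "fg_gen 0"] B_map_pow_ne_id
  by (intro Ord_in_eq_0) auto

lemma Ord_nil: "Ord_in (free_group n \<times>\<times> free_group n) (mihailova_subgroup n) ([], []) = 1"
proof (rule Ord_in_eqI)
  show "([], []) [^]\<^bsub>free_group n \<times>\<times> free_group n\<^esub> (1::nat) \<in> mihailova_subgroup n"
    unfolding pow_pair_nil nil_pow
    using subgroup.one_closed[OF subgroup_mihailova_subgroup] by (simp add: one_free_group)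
qed simp_all

lemma Ord_spectrum_mihailova_subgroup:
  "Ord_spectrum (free_group n \<times>\<times> free_group n) (mihailova_subgroup n) = UNIV"
proof -
  have "k \<in> Ord_in (free_group n \<times>\<times> free_group n) (mihailova_subgroup n) `
      carrier (free_group n \<times>\<times> free_group n)" for k
  proof -
    consider "k = 0" | "k = 1" | m where "k = Suc (Suc m)"
      by (metis One_nat_def not0_implies_Suc)
    then show ?thesis
    proof cases
      case 1
      then show ?thesis
        using Ord_gen0 by (intro rev_image_eqI[of "(fg_gen 0, [])"]) simp_all
    next
      case 2
      then show ?thesis
        using Ord_nil by (intro rev_image_eqI[of "([], [])"]) simp_all
    next
      case 3
      then show ?thesis
        using Ord_torsion_word[of m] by (intro rev_image_eqI[of "(torsion_word m, [])"])
          simp_all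
    qed
  qed
  then show ?thesis
    by (auto simp: Ord_spectrum_def)
qed

end

theorem proposition5p3:
  fixes n :: nat
  assumes "n \<ge> 2"
  shows "(\<exists>H. fin_gen_subgroup (free_group n \<times>\<times> free_group n) H \<and>
              Ord_spectrum (free_group n \<times>\<times> free_group n) H = (UNIV :: nat set))
         \<and> \<not> bounded_subgroup_spectra (free_group n \<times>\<times> free_group n)"
proof
  show "\<exists>H. fin_gen_subgroup (free_group n \<times>\<times> free_group n) H \<and>
      Ord_spectrum (free_group n \<times>\<times> free_group n) H = UNIV"
    using assms fin_gen_mihailova_subgroup Ord_spectrum_mihailova_subgroup by blast
  show "\<not> bounded_subgroup_spectra (free_group n \<times>\<times> free_group n)"
    unfolding bounded_subgroup_spectra_def
  proof
    assume "\<forall>H. fin_gen_subgroup (free_group n \<times>\<times> free_group n) H \<longrightarrow>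
        (\<exists>B. \<forall>k \<in> Ord_spectrum (free_group n \<times>\<times> free_group n) H. k \<le> B)"
    then obtain B where "\<forall>k \<in> Ord_spectrum (free_group n \<times>\<times> free_group n) (mihailova_subgroup n). k \<le> B"
      using assms fin_gen_mihailova_subgroup by blast
    then show False
      using assms Ord_spectrum_mihailova_subgroup by (metis UNIV_I Suc_n_not_le_n)
  qed
qed

end
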